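(* Let $\beta\in(0,1)$, $z>0$, $c>0$, $\delta\in(0,1)$, and let $N$ and $\Delta$ be positive integers. Let $F$ be a continuous cumulative distribution function with support $[\underline{w},\overline{w}]$, $\underline{w}<\overline{w}$, and mean $\mu_w$. Assume $\underline{w}<(1-\beta)z+\beta\mu_w$ and $z+c<\overline{w}$. For $x\in[\underline{w},\overline{w}]$ put $\Upsilon(x)=\int_{\underline{w}}^{x}x\,dF(w)+\int_{x}^{\overline{w}}w\,dF(w)$. Let $w_R(0)$ be the unique solution in $[\underline{w},\overline{w}]$ of $x=z(1-\beta)+\beta\Upsilon(x)$, and define $w_R(n)=(z+c)(1-\beta)+\beta\Upsilon(w_R(n-1))$ for all integers $n\ge1$. Then the equation $$x=z(1-\beta)+\beta\delta\,\Upsilon(w_R(\Delta))+\beta(1-\delta)\,\Upsilon(x)$$ has exactly one solution $x\in[\underline{w},\overline{w}]$; call it $w_R^\delta(0)$. Defining recursively, for $n=1,\dots,N$, $$w_R^\delta(n)=(z+c)(1-\beta)+\beta\delta\,\Upsilon(w_R(n-1+\Delta))+\beta(1-\delta)\,\Upsilon(w_R^\delta(n-1)),$$ we have $$\overline{w}>w_R^\delta(N)>\cdots>w_R^\delta(n+1)>w_R^\delta(n)>\cdots>w_R^\delta(0)>\underline{w}.$$ The analogous existence, uniqueness and strict monotonicity (with $w_R^\delta(0)>\underline{w}$ and all values finite) hold when the support of $F$ is $[\underline{w},\infty)$ with finite mean, with $\overline{w}$ replaced by $\infty$ in the definition of $\Upsilon$.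
   Context: Interpretation (the paper's model): a risk-neutral, infinitely lived worker maximizes $\mathrm{E}_0\sum_{t\ge0}\beta^t x_t$; while unemployed they draw one i.i.d. wage offer per period from $F$, and an accepted job paying $w$ is kept forever (value $w/(1-\beta)$). With $n\ge1$ remaining periods of unemployment-insurance benefits, flow income while unemployed is $z+c$, otherwise $z$. Before any extension has occurred, between offers benefits are extended by $\Delta$ periods with probability $\delta$ (so after a rejection in state $n$ the next state is $n-1+\Delta$ with probability $\delta$, else $n-1$; at $n=0$ it is $\Delta$ with probability $\delta$, else $0$); after an extension no further extension is possible, and the worker faces the standard problem whose reservation wages are $w_R(n)$. The numbers $w_R^\delta(n)$ are the reservation wages before any extension: the optimal policy in state $n$ is to accept any offer $w\ge w_R^\delta(n)$ if benefits have not yet been extended and any offer $w\ge w_R(n)$ if they have. *)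

theory Defs
  imports "HOL-Analysis.Analysis"
begin

text \<open>The upper end of the support is an extended real wu
  (wu = PInfty for the unbounded case).\<close>

definition supp_int :: "real \<Rightarrow> ereal \<Rightarrow> real set" where
  "supp_int wl wu = {x. wl \<le> x \<and> ereal x \<le> wu}"

definition Ups :: "(real \<Rightarrow> real) \<Rightarrow> real \<Rightarrow> ereal \<Rightarrow> real \<Rightarrow> real" where
  "Ups F wl wu x =
     (LINT w:{wl..x}|interval_measure F. x) +
     (LINT w:{w. x \<le> w \<and> ereal w \<le> wu}|interval_measure F. w)"

fun wR :: "real \<Rightarrow> real \<Rightarrow> real \<Rightarrow> (real \<Rightarrow> real) \<Rightarrow> real \<Rightarrow> ereal \<Rightarrow> nat \<Rightarrow> real" where
  "wR \<beta> z c F wl wu 0 =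
     (THE x. x \<in> supp_int wl wu \<and> x = z * (1 - \<beta>) + \<beta> * Ups F wl wu x)"
| "wR \<beta> z c F wl wu (Suc n) = (z + c) * (1 - \<beta>) + \<beta> * Ups F wl wu (wR \<beta> z c F wl wu n)"

fun wRd :: "real \<Rightarrow> real \<Rightarrow> real \<Rightarrow> real \<Rightarrow> nat \<Rightarrow> (real \<Rightarrow> real) \<Rightarrow> real \<Rightarrow> ereal \<Rightarrow> nat \<Rightarrow> real" where
  "wRd \<beta> z c \<delta> \<Delta> F wl wu 0 =
     (THE x. x \<in> supp_int wl wu \<and>
        x = z * (1 - \<beta>) + \<beta> * \<delta> * Ups F wl wu (wR \<beta> z c F wl wu \<Delta>)
            + \<beta> * (1 - \<delta>) * Ups F wl wu x)"
| "wRd \<beta> z c \<delta> \<Delta> F wl wu (Suc n) =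
     (z + c) * (1 - \<beta>) + \<beta> * \<delta> * Ups F wl wu (wR \<beta> z c F wl wu (n + \<Delta>))
     + \<beta> * (1 - \<delta>) * Ups F wl wu (wRd \<beta> z c \<delta> \<Delta> F wl wu n)"

end

theory Submission
  imports Defs "HOL-Probability.Distribution_Functions"
begin

text \<open>Because F has no atoms and lives on its support, Upsilon(x) is the expectation of
  max x W for W distributed according to F. This function is nondecreasing and 1-Lipschitz,
  strictly increasing to the right of wl, bounded below by the mean and equal to x to the
  right of wu. Hence for 0 \<le> k < 1 the map x \<mapsto> K + k Upsilon(x) is a contraction of the real
  line, and the hypotheses on wl and wu place its unique fixed point strictly inside the
  support; this yields w_R(0) and w_R^\<delta>(0). The first step of the recursion for w_R^\<delta>
  gains c (1 - \<beta>) > 0, and every later step inherits strictness from the previous one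
  through the strict monotonicity of Upsilon, while w_R is nondecreasing.\<close>

definition expected_max :: "real measure \<Rightarrow> real \<Rightarrow> real" where
  "expected_max M x = (\<integral>w. max x w \<partial>M)"

locale finite_mean = real_distribution M for M :: "real measure" +
  assumes integrable_id: "integrable M (\<lambda>w. w)"
begin

lemma integrable_max_const: "integrable M (\<lambda>w. max x w)"
  using integrable_id by (intro integrable_max) auto

lemma expected_max_mono: "x \<le> y \<Longrightarrow> expected_max M x \<le> expected_max M y"
  unfolding expected_max_def by (intro integral_mono integrable_max_const) auto

lemma dist_expected_max_le: "dist (expected_max M x) (expected_max M y) \<le> dist x y"
proof -
  have "\<bar>\<integral>w. max x w - max y w \<partial>M\<bar> \<le> (\<integral>w. \<bar>x - y\<bar> \<partial>M)"
    by (intro integral_abs_bound_integral Bochner_Integration.integrable_diff integrable_max_const)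
       (auto simp: max_def)
  then show ?thesis
    by (simp add: expected_max_def dist_real_def integrable_max_const prob_space[simplified])
qed

lemma mean_le_expected_max: "(\<integral>w. w \<partial>M) \<le> expected_max M x"
  unfolding expected_max_def by (intro integral_mono integrable_max_const integrable_id) auto

lemma expected_max_le:
  assumes "AE w in M. w \<le> u" and "x \<le> u"
  shows "expected_max M x \<le> u"
proof -
  have "expected_max M x \<le> (\<integral>w. u \<partial>M)"
    unfolding expected_max_def
    by (intro integral_mono_AE integrable_max_const) (use assms in \<open>auto elim!: eventually_mono\<close>)
  then show ?thesis by (simp add: prob_space[simplified])
qed

lemma expected_max_strict_mono:
  assumes "x \<le> a" "a < y" and "0 < measure M {..a}"
  shows "expected_max M x < expected_max M y"
proof -
  have "(y - a) * measure M {..a} = (\<integral>w. (y - a) * indicator {..a} w \<partial>M)"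
    by simp
  also have "\<dots> \<le> (\<integral>w. max y w - max x w \<partial>M)"
  proof (intro integral_mono Bochner_Integration.integrable_diff integrable_max_const)
    show "integrable M (\<lambda>w. (y - a) * indicator {..a} w)"
      by (intro integrable_mult_right) (auto simp: integrable_indicator_iff less_top[symmetric])
  qed (use assms in \<open>auto simp: indicator_def\<close>)
  also have "\<dots> = expected_max M y - expected_max M x"
    unfolding expected_max_def by (intro Bochner_Integration.integral_diff integrable_max_const)
  finally show ?thesis
    using assms by (smt (verit) mult_pos_pos)
qed

lemma expected_max_unique_fixed_point:
  assumes "0 \<le> k" "k < 1"
  shows "\<exists>!x. x = K + k * expected_max M x"
proof -
  have "dist (K + k * expected_max M x) (K + k * expected_max M y) \<le> k * dist x y" for x y
    using mult_left_mono[OF dist_expected_max_le \<open>0 \<le> k\<close>]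
    by (simp add: dist_real_def abs_mult abs_of_nonneg[OF assms(1)] flip: right_diff_distrib)
  then show ?thesis
    using banach_fix_type[OF assms, of "\<lambda>x. K + k * expected_max M x"] by metis
qed

end

locale wage_distribution =
  fixes F :: "real \<Rightarrow> real" and wl :: real and wu :: ereal
  assumes F_mono: "mono F"
    and F_cont: "continuous_on UNIV F"
    and F_below: "\<And>x. x \<le> wl \<Longrightarrow> F x = 0"
    and F_above: "\<And>x. wu \<le> ereal x \<Longrightarrow> F x = 1"
    and F_top: "(F \<longlongrightarrow> 1) at_top"
    and F_supp: "strict_mono_on (supp_int wl wu) F"
    and wl_wu: "ereal wl < wu"
    and mean_fin: "wu = PInfty \<Longrightarrow> integrable (interval_measure F) (\<lambda>w. w)"
begin

lemma F_bot: "(F \<longlongrightarrow> 0) at_bot"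
proof -
  have "eventually (\<lambda>x. F x = 0) at_bot"
    unfolding eventually_at_bot_linorder using F_below by blast
  then show ?thesis by (simp add: tendsto_eventually)
qed

lemma F_right_cont: "continuous (at_right a) F"
  using F_cont by (simp add: continuous_on_eq_continuous_at continuous_at_imp_continuous_at_within)

lemma real_distribution: "real_distribution (interval_measure F)"
  using F_mono F_right_cont F_bot F_top
  by (intro real_distribution_interval_measure) (auto simp: mono_def)

lemma measure_atMost: "measure (interval_measure F) {..x} = F x"
  using F_mono F_right_cont F_bot by (intro measure_interval_measure_Iic) (auto simp: mono_def)

lemma less_wu_iff: "ereal x < wu \<longleftrightarrow> (\<forall>u. wu = ereal u \<longrightarrow> x < u)"
  using wl_wu by (cases wu) auto

lemma F_pos: "wl < y \<Longrightarrow> 0 < F y"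
proof (cases "ereal y \<le> wu")
  case True
  assume "wl < y"
  then have "F wl < F y"
    using F_supp True wl_wu unfolding supp_int_def strict_mono_on_def by auto
  then show ?thesis using F_below by simp
qed (simp add: F_above)

lemma AE_greater_wl: "AE w in interval_measure F. wl < w"
proof -
  interpret real_distribution "interval_measure F" by (rule real_distribution)
  have "{..wl} \<in> null_sets (interval_measure F)"
    using measure_atMost F_below by (intro null_setsI) (auto simp: emeasure_eq_measure)
  then show ?thesis
    by (rule AE_I') auto
qed

lemma AE_le_wu: "AE w in interval_measure F. ereal w \<le> wu"
proof (cases wu)
  case (real u)
  interpret real_distribution "interval_measure F" by (rule real_distribution)
  have "prob {u<..} = prob (UNIV - {..u})"
    by (rule arg_cong[where f=prob]) auto
  also have "\<dots> = 0"
    using prob_compl[of "{..u}"] measure_atMost F_above real by simp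
  finally have "{u<..} \<in> null_sets (interval_measure F)"
    by (intro null_setsI) (auto simp: emeasure_eq_measure)
  then show ?thesis
    by (rule AE_I') (auto simp: real)
qed (use wl_wu in auto)

text \<open>F has no atoms, so the two integrals in Ups never count the point x twice.\<close>
lemma AE_neq: "AE w in interval_measure F. w \<noteq> x"
proof -
  interpret real_distribution "interval_measure F" by (rule real_distribution)
  have "cdf (interval_measure F) = F" using measure_atMost by (simp add: cdf_def fun_eq_iff)
  moreover have "isCont F x" using F_cont by (simp add: continuous_on_eq_continuous_at)
  ultimately have "prob {x} = 0"
    using isCont_cdf by metis
  then have "{x} \<in> null_sets (interval_measure F)"
    by (intro null_setsI) (auto simp: emeasure_eq_measure)
  then show ?thesis by (rule AE_I') auto
qed

lemma integrable_id: "integrable (interval_measure F) (\<lambda>w. w)"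
proof (cases wu)
  case (real u)
  interpret real_distribution "interval_measure F" by (rule real_distribution)
  show ?thesis
  proof (rule integrable_const_bound[where B="\<bar>wl\<bar> + \<bar>u\<bar>"])
    show "AE w in interval_measure F. norm w \<le> \<bar>wl\<bar> + \<bar>u\<bar>"
      using AE_greater_wl AE_le_wu by eventually_elim (auto simp: real)
  qed simp
qed (use mean_fin wl_wu in auto)

sublocale finite_mean "interval_measure F"
  using real_distribution integrable_id by (simp add: finite_mean_def finite_mean_axioms_def)

lemma Ups_eq_expected_max: "Ups F wl wu x = expected_max (interval_measure F) x"
proof -
  let ?S = "{w. x \<le> w \<and> ereal w \<le> wu}"
  have "Ups F wl wu x =
      (\<integral>w. indicator {wl..x} w *\<^sub>R x + indicator ?S w *\<^sub>R w \<partial>interval_measure F)"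
    unfolding Ups_def set_lebesgue_integral_def
    by (intro Bochner_Integration.integral_add[symmetric] integrable_mult_indicator integrable_id)
       auto
  also have "\<dots> = expected_max (interval_measure F) x"
    unfolding expected_max_def
  proof (rule integral_cong_AE)
    show "AE w in interval_measure F. indicator {wl..x} w *\<^sub>R x + indicator ?S w *\<^sub>R w = max x w"
      using AE_greater_wl AE_le_wu AE_neq[of x] by eventually_elim (auto simp: indicator_def)
  qed auto
  finally show ?thesis .
qed

lemma Ups_mono: "x \<le> y \<Longrightarrow> Ups F wl wu x \<le> Ups F wl wu y"
  unfolding Ups_eq_expected_max by (rule expected_max_mono)

lemma Ups_strict_mono:
  assumes "x < y" "wl < y"
  shows "Ups F wl wu x < Ups F wl wu y"
proof -
  define a where "a = (max x wl + y) / 2"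
  have "x \<le> a" "a < y" "wl < a"
    using assms unfolding a_def by auto
  then show ?thesis
    unfolding Ups_eq_expected_max
    by (intro expected_max_strict_mono) (auto simp: measure_atMost F_pos)
qed

lemma mean_le_Ups: "(\<integral>w. w \<partial>interval_measure F) \<le> Ups F wl wu x"
  unfolding Ups_eq_expected_max by (rule mean_le_expected_max)

lemma Ups_le_max_wu: "wu = ereal u \<Longrightarrow> Ups F wl wu x \<le> max x u"
  unfolding Ups_eq_expected_max
  by (intro expected_max_le) (use AE_le_wu in \<open>auto elim!: eventually_mono\<close>)

lemma fixed_point_in_support:
  assumes k: "0 \<le> k" "k < 1"
    and low: "wl < K + k * (\<integral>w. w \<partial>interval_measure F)"
    and high: "\<And>u. wu = ereal u \<Longrightarrow> K + k * u < u"
  defines "x \<equiv> THE x. x \<in> supp_int wl wu \<and> x = K + k * Ups F wl wu x"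
  shows "\<exists>!x. x \<in> supp_int wl wu \<and> x = K + k * Ups F wl wu x"
    and "x = K + k * Ups F wl wu x" and "wl < x" and "ereal x < wu"
proof -
  obtain y where fixed: "y = K + k * Ups F wl wu y"
    and uniq: "\<And>y'. y' = K + k * Ups F wl wu y' \<Longrightarrow> y' = y"
    using expected_max_unique_fixed_point[OF k] unfolding Ups_eq_expected_max by metis
  have "K + k * (\<integral>w. w \<partial>interval_measure F) \<le> y"
    using fixed mult_left_mono[OF mean_le_Ups k(1), of y] by linarith
  with low have wl_y: "wl < y" by simp
  have y_wu: "ereal y < wu"
    unfolding less_wu_iff
  proof (intro allI impI)
    fix u assume u: "wu = ereal u"
    show "y < u"
    proof (rule ccontr)
      assume "\<not> y < u"
      then have "Ups F wl wu y \<le> y" using Ups_le_max_wu[OF u, of y] by simp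
      then have "k * Ups F wl wu y \<le> k * y" using k(1) by (rule mult_left_mono)
      then have "(1 - k) * y \<le> K" using fixed by (simp add: algebra_simps)
      moreover have "(1 - k) * u \<le> (1 - k) * y" using \<open>\<not> y < u\<close> k by simp
      ultimately show False using high[OF u] by (simp add: algebra_simps)
    qed
  qed
  have "y \<in> supp_int wl wu" using wl_y y_wu unfolding supp_int_def by simp
  then show unique: "\<exists>!x. x \<in> supp_int wl wu \<and> x = K + k * Ups F wl wu x"
    using fixed uniq by blast
  have "x = y"
    unfolding x_def using \<open>y \<in> supp_int wl wu\<close> fixed by (intro the1_equality unique) simp
  then show "x = K + k * Ups F wl wu x" "wl < x" "ereal x < wu"
    using fixed wl_y y_wu by simp_all
qed

end

locale job_search = wage_distribution F wl wu for F wl wu +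
  fixes \<beta> z c \<delta> :: real and \<Delta> :: nat
  assumes beta: "0 < \<beta>" "\<beta> < 1"
    and c_pos: "0 < c"
    and delta: "0 \<le> \<delta>" "\<delta> < 1"
    and low: "wl < (1 - \<beta>) * z + \<beta> * (\<integral>w. w \<partial>interval_measure F)"
    and high: "ereal (z + c) < wu"
begin

lemma z_plus_c_less_wu: "wu = ereal u \<Longrightarrow> z + c < u"
  using high by simp

lemma wR_0:
  shows "wR \<beta> z c F wl wu 0 = z * (1 - \<beta>) + \<beta> * Ups F wl wu (wR \<beta> z c F wl wu 0)"
    and "wl < wR \<beta> z c F wl wu 0" and "ereal (wR \<beta> z c F wl wu 0) < wu"
proof -
  have "0 \<le> \<beta>" "\<beta> < 1" "wl < z * (1 - \<beta>) + \<beta> * (\<integral>w. w \<partial>interval_measure F)"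
    using beta low by (simp_all add: algebra_simps)
  moreover have "z * (1 - \<beta>) + \<beta> * u < u" if "wu = ereal u" for u
  proof -
    have "(1 - \<beta>) * z < (1 - \<beta>) * u"
      using z_plus_c_less_wu[OF that] c_pos beta by simp
    then show ?thesis by (simp add: algebra_simps)
  qed
  ultimately show "wR \<beta> z c F wl wu 0 = z * (1 - \<beta>) + \<beta> * Ups F wl wu (wR \<beta> z c F wl wu 0)"
    and "wl < wR \<beta> z c F wl wu 0" and "ereal (wR \<beta> z c F wl wu 0) < wu"
    unfolding wR.simps by (fact fixed_point_in_support)+
qed

lemma wR_less_wu: "ereal (wR \<beta> z c F wl wu n) < wu"
proof (induction n)
  case 0
  show ?case by (rule wR_0)
next
  case (Suc n)
  show ?case
    unfolding less_wu_iff
  proof (intro allI impI)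
    fix u assume u: "wu = ereal u"
    have "Ups F wl wu (wR \<beta> z c F wl wu n) \<le> u"
      using Ups_le_max_wu[OF u, of "wR \<beta> z c F wl wu n"] Suc u by simp
    then have "\<beta> * Ups F wl wu (wR \<beta> z c F wl wu n) \<le> \<beta> * u"
      using beta by simp
    moreover have "(z + c) * (1 - \<beta>) < u * (1 - \<beta>)"
      using z_plus_c_less_wu[OF u] beta by simp
    ultimately show "wR \<beta> z c F wl wu (Suc n) < u"
      by (simp add: algebra_simps)
  qed
qed

lemma wR_incseq: "incseq (wR \<beta> z c F wl wu)"
proof (rule incseq_SucI)
  fix n show "wR \<beta> z c F wl wu n \<le> wR \<beta> z c F wl wu (Suc n)"
  proof (induction n)
    case 0
    have "z * (1 - \<beta>) \<le> (z + c) * (1 - \<beta>)"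
      using c_pos beta by simp
    then show ?case
      using wR_0(1) wR.simps(2)[of \<beta> z c F wl wu 0] by linarith
  next
    case (Suc n)
    then show ?case
      using mult_left_mono[OF Ups_mono[OF Suc] less_imp_le[OF beta(1)]] by simp
  qed
qed

lemma wRd_0:
  shows "\<exists>!x. x \<in> supp_int wl wu \<and>
            x = z * (1 - \<beta>) + \<beta> * \<delta> * Ups F wl wu (wR \<beta> z c F wl wu \<Delta>)
                + \<beta> * (1 - \<delta>) * Ups F wl wu x"
    and "wRd \<beta> z c \<delta> \<Delta> F wl wu 0 =
            z * (1 - \<beta>) + \<beta> * \<delta> * Ups F wl wu (wR \<beta> z c F wl wu \<Delta>)
                + \<beta> * (1 - \<delta>) * Ups F wl wu (wRd \<beta> z c \<delta> \<Delta> F wl wu 0)"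
    and "wl < wRd \<beta> z c \<delta> \<Delta> F wl wu 0" and "ereal (wRd \<beta> z c \<delta> \<Delta> F wl wu 0) < wu"
proof -
  let ?\<mu> = "\<integral>w. w \<partial>interval_measure F"
  let ?U = "Ups F wl wu (wR \<beta> z c F wl wu \<Delta>)"
  have "\<beta> * (1 - \<delta>) \<le> \<beta>"
    by (rule mult_left_le) (use beta delta in auto)
  then have k: "0 \<le> \<beta> * (1 - \<delta>)" "\<beta> * (1 - \<delta>) < 1"
    using beta delta by (simp, linarith)
  have "\<beta> * \<delta> * ?\<mu> \<le> \<beta> * \<delta> * ?U"
    using mean_le_Ups beta delta by (simp add: mult_left_mono)
  then have low': "wl < z * (1 - \<beta>) + \<beta> * \<delta> * ?U + \<beta> * (1 - \<delta>) * ?\<mu>"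
    using low by (simp add: algebra_simps)
  have high': "z * (1 - \<beta>) + \<beta> * \<delta> * ?U + \<beta> * (1 - \<delta>) * u < u" if u: "wu = ereal u" for u
  proof -
    have "?U \<le> u"
      using Ups_le_max_wu[OF u, of "wR \<beta> z c F wl wu \<Delta>"] wR_less_wu[of \<Delta>] u by simp
    then have "\<beta> * \<delta> * ?U \<le> \<beta> * \<delta> * u"
      using beta delta by (simp add: mult_left_mono)
    moreover have "(1 - \<beta>) * z < (1 - \<beta>) * u"
      using z_plus_c_less_wu[OF u] c_pos beta by simp
    ultimately show ?thesis by (simp add: algebra_simps)
  qed
  from fixed_point_in_support[OF k low' high']
  show "\<exists>!x. x \<in> supp_int wl wu \<and>
            x = z * (1 - \<beta>) + \<beta> * \<delta> * ?U + \<beta> * (1 - \<delta>) * Ups F wl wu x"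
    and "wRd \<beta> z c \<delta> \<Delta> F wl wu 0 =
            z * (1 - \<beta>) + \<beta> * \<delta> * ?U + \<beta> * (1 - \<delta>) * Ups F wl wu (wRd \<beta> z c \<delta> \<Delta> F wl wu 0)"
    and "wl < wRd \<beta> z c \<delta> \<Delta> F wl wu 0" and "ereal (wRd \<beta> z c \<delta> \<Delta> F wl wu 0) < wu"
    unfolding wRd.simps by simp_all
qed

lemma wRd_less_wu: "ereal (wRd \<beta> z c \<delta> \<Delta> F wl wu n) < wu"
proof (induction n)
  case 0
  show ?case by (rule wRd_0)
next
  case (Suc n)
  show ?case
    unfolding less_wu_iff
  proof (intro allI impI)
    fix u assume u: "wu = ereal u"
    have "Ups F wl wu (wR \<beta> z c F wl wu (n + \<Delta>)) \<le> u"
      using Ups_le_max_wu[OF u, of "wR \<beta> z c F wl wu (n + \<Delta>)"] wR_less_wu u by simp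
    then have "\<beta> * \<delta> * Ups F wl wu (wR \<beta> z c F wl wu (n + \<Delta>)) \<le> \<beta> * \<delta> * u"
      using beta delta by (simp add: mult_left_mono)
    moreover have "Ups F wl wu (wRd \<beta> z c \<delta> \<Delta> F wl wu n) \<le> u"
      using Ups_le_max_wu[OF u, of "wRd \<beta> z c \<delta> \<Delta> F wl wu n"] Suc u by simp
    then have "\<beta> * (1 - \<delta>) * Ups F wl wu (wRd \<beta> z c \<delta> \<Delta> F wl wu n) \<le> \<beta> * (1 - \<delta>) * u"
      using beta delta by simp
    moreover have "(z + c) * (1 - \<beta>) < u * (1 - \<beta>)"
      using z_plus_c_less_wu[OF u] beta by simp
    ultimately show "wRd \<beta> z c \<delta> \<Delta> F wl wu (Suc n) < u"
      by (simp add: algebra_simps)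
  qed
qed

lemma wRd_less_Suc: "wRd \<beta> z c \<delta> \<Delta> F wl wu n < wRd \<beta> z c \<delta> \<Delta> F wl wu (Suc n)"
proof -
  have "wl < wRd \<beta> z c \<delta> \<Delta> F wl wu n \<and> wRd \<beta> z c \<delta> \<Delta> F wl wu n < wRd \<beta> z c \<delta> \<Delta> F wl wu (Suc n)"
  proof (induction n)
    case 0
    have "z * (1 - \<beta>) < (z + c) * (1 - \<beta>)"
      using c_pos beta by simp
    then show ?case
      using wRd_0(2-3) wRd.simps(2)[of \<beta> z c \<delta> \<Delta> F wl wu 0] by simp
  next
    case (Suc n)
    let ?d = "wRd \<beta> z c \<delta> \<Delta> F wl wu" and ?r = "wR \<beta> z c F wl wu"
    have "wl < ?d (Suc n)"
      using Suc by simp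
    then have "Ups F wl wu (?d n) < Ups F wl wu (?d (Suc n))"
      using Suc by (intro Ups_strict_mono) simp_all
    then have "\<beta> * (1 - \<delta>) * Ups F wl wu (?d n) < \<beta> * (1 - \<delta>) * Ups F wl wu (?d (Suc n))"
      using beta delta by simp
    moreover have "Ups F wl wu (?r (n + \<Delta>)) \<le> Ups F wl wu (?r (Suc n + \<Delta>))"
      using wR_incseq by (intro Ups_mono) (simp add: incseq_Suc_iff)
    then have "\<beta> * \<delta> * Ups F wl wu (?r (n + \<Delta>)) \<le> \<beta> * \<delta> * Ups F wl wu (?r (Suc n + \<Delta>))"
      using beta delta by (simp add: mult_left_mono)
    ultimately show ?case
      using \<open>wl < ?d (Suc n)\<close> by simp
  qed
  then show ?thesis ..
qed

end

theorem proposition2: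
  fixes \<beta> z c \<delta> wl :: real and N \<Delta> :: nat and F :: "real \<Rightarrow> real" and wu :: ereal
  assumes beta: "0 < \<beta>" "\<beta> < 1"
    and zc: "0 < z" "0 < c"
    and delta: "0 < \<delta>" "\<delta> < 1"
    and N: "1 \<le> N" and Delta: "1 \<le> \<Delta>"
    and F_mono: "mono F"
    and F_cont: "continuous_on UNIV F"
    and F_below: "\<And>x. x \<le> wl \<Longrightarrow> F x = 0"
    and F_above: "\<And>x. wu \<le> ereal x \<Longrightarrow> F x = 1"
    and F_top: "(F \<longlongrightarrow> 1) at_top"
    and F_supp: "strict_mono_on (supp_int wl wu) F"
    and wl_wu: "ereal wl < wu"
    and mean_fin: "wu = PInfty \<Longrightarrow> integrable (interval_measure F) (\<lambda>w. w)"
    and low: "wl < (1 - \<beta>) * z + \<beta> * (\<integral>w. w \<partial>interval_measure F)"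
    and high: "ereal (z + c) < wu"
  shows "(\<exists>!x. x \<in> supp_int wl wu \<and>
            x = z * (1 - \<beta>) + \<beta> * \<delta> * Ups F wl wu (wR \<beta> z c F wl wu \<Delta>)
                + \<beta> * (1 - \<delta>) * Ups F wl wu x)
       \<and> ereal (wRd \<beta> z c \<delta> \<Delta> F wl wu N) < wu
       \<and> (\<forall>n<N. wRd \<beta> z c \<delta> \<Delta> F wl wu n < wRd \<beta> z c \<delta> \<Delta> F wl wu (Suc n))
       \<and> wl < wRd \<beta> z c \<delta> \<Delta> F wl wu 0"
proof -
  interpret job_search F wl wu \<beta> z c \<delta> \<Delta>
    using assms by unfold_locales auto
  show ?thesis
    using wRd_0(1,3) wRd_less_wu wRd_less_Suc by blast
qed

end
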